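(* Let $X_1,X_2,\dots$ be i.i.d. $\mathbb{Z}$-valued random variables and $S_n=\sum_{j=1}^nX_j$. For every $N\in\mathbb{N}\setminus\{1\}$, $$\frac{1}{1+\sum_{i=1}^{N-1}P\{S_i\in[0]_N\}}\le\mathbb{P}^{(N)}_{\mathcal{R}}\Big(\bigcup_{n=1}^N\{\mathcal{R}^{(N)}_n=0\}\Big)\le\frac{2}{1+\sum_{i=1}^{N-1}P\{S_i\in[0]_N\}}.$$
   Context: $X_j$ live on $(\Omega,\mathcal{F},P)$. $[y]_N=\{y+kN:k\in\mathbb{Z}\}$. For $N\in\mathbb{N}$, $X^{(N)}_0$ is uniform on $\{0,\dots,N-1\}$ under $(\Omega_N,\mathcal{F}_N,\mu_N)$; $(b\bmod N)$ is the remainder of $b\in\mathbb{Z}$ divided by $N$; $\mathcal{R}^{(N)}_n=(X^{(N)}_0+S_n\bmod N)$; $\mathbb{P}^{(N)}_{\mathcal{R}}=\mu_N\times P$. *)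

theory Defs
  imports "HOL-Probability.Probability"
begin

definition partial_sum :: "(nat \<Rightarrow> 'a \<Rightarrow> int) \<Rightarrow> nat \<Rightarrow> 'a \<Rightarrow> int" where
  "partial_sum X n \<omega> = (\<Sum>j\<in>{1..n}. X j \<omega>)"

text \<open>The measure mu_N x P: X_0^(N) uniform on {0,...,N-1}, independent of the walk.\<close>
definition rw_mod_space :: "nat \<Rightarrow> 'a measure \<Rightarrow> (nat \<times> 'a) measure" where
  "rw_mod_space N M = measure_pmf (pmf_of_set {0..<N}) \<Otimes>\<^sub>M M"

definition R_mod :: "nat \<Rightarrow> (nat \<Rightarrow> 'a \<Rightarrow> int) \<Rightarrow> nat \<Rightarrow> nat \<times> 'a \<Rightarrow> int" where
  "R_mod N X n p = (int (fst p) + partial_sum X n (snd p)) mod int N"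

end

theory Submission
  imports Defs
begin

text \<open>Write \<open>p\<^sub>k = P{S\<^sub>k \<equiv> 0 mod N}\<close> and \<open>q\<^sub>l = P{S\<^sub>i \<noteq> 0 mod N for 1 \<le> i \<le> l}\<close>.
  Splitting according to the last time \<open>k \<le> m\<close> with \<open>S\<^sub>k \<equiv> 0\<close>, independence and stationarity of
  the increments give \<open>\<Sum>\<^sub>k\<^sub>\<le>\<^sub>m p\<^sub>k q\<^sub>m\<^sub>-\<^sub>k = 1\<close>; summing over \<open>m\<close> and comparing the square
  \<open>[0,N)\<^sup>2\<close> with the triangles \<open>i + j < N\<close> and \<open>i + j < 2N\<close> yields
  \<open>N \<le> (\<Sum>\<^sub>k\<^sub><\<^sub>N p\<^sub>k)(\<Sum>\<^sub>l\<^sub><\<^sub>N q\<^sub>l) \<le> 2N\<close>.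
  On the other hand, along a fixed path the number of starting points \<open>u < N\<close> from which the walk
  hits \<open>0\<close> within \<open>N\<close> steps equals the number of distinct residues among \<open>S\<^sub>1, \<dots>, S\<^sub>N\<close>, which is
  also the number of times \<open>n\<close> whose residue does not recur after \<open>n\<close>. Averaging, the hitting probability is
  \<open>(\<Sum>\<^sub>l\<^sub><\<^sub>N q\<^sub>l) / N\<close>, and \<open>\<Sum>\<^sub>k\<^sub><\<^sub>N p\<^sub>k\<close> is the denominator of the statement.\<close>

lemma card_last_occurrences:
  fixes g :: "nat \<Rightarrow> 'b"
  assumes "finite A"
  shows "card {n\<in>A. \<forall>j\<in>A. n < j \<longrightarrow> g j \<noteq> g n} = card (g ` A)"
proof (rule bij_betw_same_card, rule bij_betw_imageI)
  show "inj_on g {n\<in>A. \<forall>j\<in>A. n < j \<longrightarrow> g j \<noteq> g n}"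
  proof (rule inj_onI)
    fix a b assume "a \<in> {n\<in>A. \<forall>j\<in>A. n < j \<longrightarrow> g j \<noteq> g n}"
      and "b \<in> {n\<in>A. \<forall>j\<in>A. n < j \<longrightarrow> g j \<noteq> g n}" and "g a = g b"
    then show "a = b" by (cases a b rule: linorder_cases) auto
  qed
  show "g ` {n\<in>A. \<forall>j\<in>A. n < j \<longrightarrow> g j \<noteq> g n} = g ` A"
  proof (intro equalityI subsetI)
    fix v assume "v \<in> g ` A"
    define n where "n = Max {n\<in>A. g n = v}"
    have "n \<in> A" "g n = v" "\<forall>j\<in>A. g j = v \<longrightarrow> j \<le> n"
      using Max_in[of "{n\<in>A. g n = v}"] \<open>v \<in> g ` A\<close> assms by (auto simp: n_def)
    then have "n \<in> {n\<in>A. \<forall>j\<in>A. n < j \<longrightarrow> g j \<noteq> g n}"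
      by (auto simp: not_le[symmetric])
    with \<open>g n = v\<close> show "v \<in> g ` {n\<in>A. \<forall>j\<in>A. n < j \<longrightarrow> g j \<noteq> g n}"
      by blast
  qed auto
qed

lemma card_shifts_hitting_zero:
  fixes s :: "nat \<Rightarrow> int" and N :: nat
  assumes "N > 0"
  shows "card {u\<in>{0..<N}. \<exists>n\<in>A. (int u + s n) mod int N = 0} = card ((\<lambda>n. s n mod int N) ` A)"
proof (rule bij_betw_same_card, rule bij_betw_imageI)
  let ?U = "{u\<in>{0..<N}. \<exists>n\<in>A. (int u + s n) mod int N = 0}"
  have hit_iff: "(int u + s n) mod int N = 0 \<longleftrightarrow> s n mod int N = (- int u) mod int N" for u n
    by (simp add: mod_eq_dvd_iff mod_eq_0_iff_dvd add.commute)
  show "inj_on (\<lambda>u. (- int u) mod int N) ?U"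
  proof (rule inj_onI)
    fix a b assume "a \<in> ?U" "b \<in> ?U" "(- int a) mod int N = (- int b) mod int N"
    then have "int N dvd int b - int a" "\<bar>int b - int a\<bar> < int N"
      by (auto simp: mod_eq_dvd_iff)
    then show "a = b" using dvd_imp_le_int[of "int b - int a" "int N"] by auto
  qed
  show "(\<lambda>u. (- int u) mod int N) ` ?U = (\<lambda>n. s n mod int N) ` A"
  proof (intro equalityI subsetI)
    fix v assume "v \<in> (\<lambda>u. (- int u) mod int N) ` ?U"
    then obtain u n where v: "v = (- int u) mod int N" and "n \<in> A"
      and hit: "(int u + s n) mod int N = 0"
      by auto
    have "s n mod int N = v" unfolding v using hit_iff[of u n] hit by (rule iffD1)
    with \<open>n \<in> A\<close> show "v \<in> (\<lambda>n. s n mod int N) ` A" by (auto intro: rev_image_eqI)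
  next
    fix v assume "v \<in> (\<lambda>n. s n mod int N) ` A"
    then obtain n where n: "n \<in> A" "v = s n mod int N" by auto
    define u where "u = nat ((- v) mod int N)"
    have "u < N" and u: "(- int u) mod int N = v"
      using assms by (auto simp: u_def n nat_less_iff mod_minus_eq)
    moreover have "(int u + s n) mod int N = 0"
      using hit_iff[of u n] u n(2) by metis
    ultimately have "u \<in> ?U" using n(1) by force
    then show "v \<in> (\<lambda>u. (- int u) mod int N) ` ?U" using u[symmetric] by (rule rev_image_eqI)
  qed
qed

lemma ex_last_index:
  fixes m :: nat
  assumes "P 0"
  shows "\<exists>k\<le>m. P k \<and> (\<forall>j\<in>{k<..m}. \<not> P j)"
proof (induction m)
  case 0
  with assms show ?case by auto
next
  case (Suc m)
  show ?case
  proof (cases "P (Suc m)")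
    case True
    then show ?thesis by (intro exI[of _ "Suc m"]) auto
  next
    case False
    from Suc.IH obtain k where "k \<le> m" "P k" "\<forall>j\<in>{k<..m}. \<not> P j" by blast
    with False show ?thesis by (intro exI[of _ k]) (auto simp: le_Suc_eq)
  qed
qed

lemma measurable_map_list:
  assumes "\<And>i. i \<in> set xs \<Longrightarrow> f i \<in> measurable M (count_space UNIV)"
  shows "(\<lambda>\<omega>. map (\<lambda>i. f i \<omega>) xs) \<in> measurable M (count_space (UNIV :: 'b::countable list set))"
  using assms
proof (induction xs)
  case (Cons x xs)
  have "(\<lambda>\<omega>. (f x \<omega>, map (\<lambda>i. f i \<omega>) xs)) \<in> measurable M (count_space UNIV \<Otimes>\<^sub>M count_space UNIV)"
    using Cons by (intro measurable_Pair) auto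
  then have "(\<lambda>\<omega>. (f x \<omega>, map (\<lambda>i. f i \<omega>) xs)) \<in> measurable M (count_space UNIV)"
    by (simp add: pair_measure_countable)
  then have "(\<lambda>\<omega>. case_prod Cons (f x \<omega>, map (\<lambda>i. f i \<omega>) xs)) \<in> measurable M (count_space UNIV)"
    by (rule measurable_compose[OF _ measurable_count_space])
  then show ?case by simp
qed simp

lemma (in prob_space) sum_prob_eq_expectation_count:
  assumes "finite I" and "\<And>i. i \<in> I \<Longrightarrow> A i \<in> events"
  shows "(\<Sum>i\<in>I. prob (A i)) = expectation (\<lambda>\<omega>. real (card {i\<in>I. \<omega> \<in> A i}))"
proof -
  have "(\<Sum>i\<in>I. prob (A i)) = (\<Sum>i\<in>I. expectation (indicator (A i)))"
    using assms(2) by (simp add: Int_absorb2)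
  also have "\<dots> = expectation (\<lambda>\<omega>. \<Sum>i\<in>I. indicator (A i) \<omega>)"
    using assms by (intro Bochner_Integration.integral_sum[symmetric] integrable_real_indicator)
      (auto simp: less_top[symmetric])
  also have "\<dots> = expectation (\<lambda>\<omega>. real (card {i\<in>I. \<omega> \<in> A i}))"
    using assms(1) by (simp add: indicator_def Int_def)
  finally show ?thesis .
qed

lemma (in prob_space) sum_prob_eq_if_counts_eq:
  assumes "finite I" "finite J" "\<And>i. i \<in> I \<Longrightarrow> A i \<in> events" "\<And>j. j \<in> J \<Longrightarrow> B j \<in> events"
    and "\<And>\<omega>. \<omega> \<in> space M \<Longrightarrow> card {i\<in>I. \<omega> \<in> A i} = card {j\<in>J. \<omega> \<in> B j}"
  shows "(\<Sum>i\<in>I. prob (A i)) = (\<Sum>j\<in>J. prob (B j))"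
  using assms by (simp add: sum_prob_eq_expectation_count cong: Bochner_Integration.integral_cong)

lemma (in prob_space) measure_uniform_pair:
  assumes "finite U" "U \<noteq> {}" "A \<in> sets (measure_pmf (pmf_of_set U) \<Otimes>\<^sub>M M)"
  shows "measure (measure_pmf (pmf_of_set U) \<Otimes>\<^sub>M M) A = (\<Sum>u\<in>U. prob (Pair u -` A)) / card U"
proof -
  have "emeasure (measure_pmf (pmf_of_set U) \<Otimes>\<^sub>M M) A
      = (\<integral>\<^sup>+u. emeasure M (Pair u -` A) \<partial>measure_pmf (pmf_of_set U))"
    using assms(3) by (rule emeasure_pair_measure_alt)
  also have "\<dots> = (\<Sum>u\<in>U. emeasure M (Pair u -` A)) / card U"
    using assms(1,2) by (subst nn_integral_pmf_of_set) auto
  also have "\<dots> = ennreal ((\<Sum>u\<in>U. prob (Pair u -` A)) / card U)"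
    using assms(1,2) by (simp add: emeasure_eq_measure sum_ennreal divide_ennreal
        ennreal_of_nat_eq_real_of_nat sum_nonneg card_gt_0_iff)
  finally show ?thesis
    by (rule measure_eq_emeasure_eq_ennreal[rotated]) (auto intro!: sum_nonneg divide_nonneg_nonneg)
qed

lemma sum_product_bounds_of_convolution:
  fixes p q :: "nat \<Rightarrow> real"
  assumes "\<And>i. 0 \<le> p i" "\<And>j. 0 \<le> q j" and conv: "\<And>m. (\<Sum>k\<le>m. p k * q (m - k)) = 1"
  shows "real N \<le> (\<Sum>i<N. p i) * (\<Sum>j<N. q j)" and "(\<Sum>i<N. p i) * (\<Sum>j<N. q j) \<le> 2 * real N"
proof -
  have triangle: "(\<Sum>(i, j)\<in>{(i, j). i + j < T}. p i * q j) = real T" for T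
    using conv by (simp add: sum.triangle_reindex)
  have finite_triangle: "finite {(i, j). i + j < T}" for T :: nat
    by (rule finite_subset[of _ "{..<T} \<times> {..<T}"]) auto
  have square: "(\<Sum>i<N. p i) * (\<Sum>j<N. q j) = (\<Sum>(i, j)\<in>{..<N} \<times> {..<N}. p i * q j)"
    by (simp add: sum_product sum.cartesian_product)
  have "real N = (\<Sum>(i, j)\<in>{(i, j). i + j < N}. p i * q j)" by (rule triangle[symmetric])
  also have "\<dots> \<le> (\<Sum>(i, j)\<in>{..<N} \<times> {..<N}. p i * q j)"
    by (rule sum_mono2) (auto intro!: mult_nonneg_nonneg assms(1,2))
  finally show "real N \<le> (\<Sum>i<N. p i) * (\<Sum>j<N. q j)" unfolding square .
  have "(\<Sum>(i, j)\<in>{..<N} \<times> {..<N}. p i * q j) \<le> (\<Sum>(i, j)\<in>{(i, j). i + j < 2 * N}. p i * q j)"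
    by (rule sum_mono2[OF finite_triangle]) (auto intro!: mult_nonneg_nonneg assms(1,2))
  also have "\<dots> = 2 * real N" by (simp add: triangle)
  finally show "(\<Sum>i<N. p i) * (\<Sum>j<N. q j) \<le> 2 * real N" unfolding square .
qed

definition avoiding :: "nat \<Rightarrow> nat \<Rightarrow> int list set" where
  "avoiding N l = {w. \<forall>i\<in>{1..l}. sum_list (take i w) mod int N \<noteq> 0}"

locale iid_walk = prob_space M for M :: "'a measure" +
  fixes X :: "nat \<Rightarrow> 'a \<Rightarrow> int"
  assumes indep: "indep_vars (\<lambda>_. count_space UNIV) X {1..}"
    and ident: "\<And>i. i \<ge> 1 \<Longrightarrow> distr M (count_space UNIV) (X i) = distr M (count_space UNIV) (X 1)"
begin

lemma measurable_X [measurable]: "i \<ge> 1 \<Longrightarrow> X i \<in> measurable M (count_space UNIV)"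
  using indep unfolding indep_vars_def by auto

text \<open>\<open>block k l \<omega>\<close> lists the increments \<open>X (k+1) \<omega>, \<dots>, X (k+l) \<omega>\<close>; as lists, blocks starting at
  different times live in the same countable space and can be compared in distribution.\<close>

definition block :: "nat \<Rightarrow> nat \<Rightarrow> 'a \<Rightarrow> int list" where
  "block k l \<omega> = map (\<lambda>t. X (k + Suc t) \<omega>) [0..<l]"

lemma measurable_block [measurable]: "block k l \<in> measurable M (count_space UNIV)"
  unfolding block_def by (intro measurable_map_list measurable_X) simp

lemma length_block [simp]: "length (block k l \<omega>) = l"
  by (simp add: block_def)

lemma block_append: "block k (i + j) \<omega> = block k i \<omega> @ block (k + i) j \<omega>"
proof -
  have "[i..<i + j] = map (\<lambda>t. t + i) [0..<j]"
    by (simp add: map_add_upt add.commute)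
  then show ?thesis
    unfolding block_def upt_add_eq_append[OF le0] by (simp add: ac_simps del: upt_Suc)
qed

lemma take_block: "i \<le> l \<Longrightarrow> take i (block k l \<omega>) = block k i \<omega>"
  using block_append[of k i "l - i" \<omega>] by simp

lemma partial_sum_Suc: "partial_sum X (Suc n) \<omega> = partial_sum X n \<omega> + X (Suc n) \<omega>"
  by (simp add: partial_sum_def)

lemma sum_list_block: "sum_list (block k l \<omega>) = partial_sum X (k + l) \<omega> - partial_sum X k \<omega>"
proof (induction l)
  case (Suc l)
  have "sum_list (block k (Suc l) \<omega>) = sum_list (block k l \<omega>) + X (Suc (k + l)) \<omega>"
    using block_append[of k l 1 \<omega>] by (simp add: block_def)
  also have "\<dots> = partial_sum X (k + Suc l) \<omega> - partial_sum X k \<omega>"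
    using Suc.IH partial_sum_Suc[of "k + l" \<omega>] by simp
  finally show ?case .
qed (simp add: block_def)

lemma prob_X_vimage: "i \<ge> 1 \<Longrightarrow> prob (X i -` A \<inter> space M) = prob (X 1 -` A \<inter> space M)"
  using ident[of i] measure_distr[OF measurable_X[of i], of A] measure_distr[OF measurable_X[of 1], of A]
  by simp

lemma prob_block_eq_prod:
  assumes "length w = l"
  shows "prob {\<omega>\<in>space M. block k l \<omega> = w} = (\<Prod>t<l. prob (X 1 -` {w ! t} \<inter> space M))"
proof (cases "l = 0")
  case True
  with assms show ?thesis by (simp add: block_def prob_space)
next
  case False
  let ?J = "(\<lambda>t. k + Suc t) ` {..<l}"
  have "{\<omega>\<in>space M. block k l \<omega> = w} = (\<Inter>i\<in>?J. X i -` {w ! (i - Suc k)} \<inter> space M)"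
    using assms False by (auto simp: block_def list_eq_iff_nth_eq)
  also have "prob \<dots> = (\<Prod>i\<in>?J. prob (X i -` {w ! (i - Suc k)} \<inter> space M))"
    using False by (intro indep_varsD[OF indep]) auto
  also have "\<dots> = (\<Prod>t<l. prob (X (k + Suc t) -` {w ! t} \<inter> space M))"
    by (simp add: prod.reindex inj_on_def)
  also have "\<dots> = (\<Prod>t<l. prob (X 1 -` {w ! t} \<inter> space M))"
    by (intro prod.cong refl prob_X_vimage) simp
  finally show ?thesis .
qed

lemma prob_block_shift: "prob {\<omega>\<in>space M. block k l \<omega> \<in> B} = prob {\<omega>\<in>space M. block 0 l \<omega> \<in> B}"
proof -
  have point: "prob {\<omega>\<in>space M. block k l \<omega> = w} = prob {\<omega>\<in>space M. block 0 l \<omega> = w}" for w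
  proof (cases "length w = l")
    case False
    then have "{\<omega>\<in>space M. block k l \<omega> = w} = {}" "{\<omega>\<in>space M. block 0 l \<omega> = w} = {}"
      by auto
    then show ?thesis by (simp only: measure_empty)
  qed (simp add: prob_block_eq_prod)
  have emeasure_distr_block: "emeasure (distr M (count_space UNIV) (block k l)) {w}
      = ennreal (prob {\<omega>\<in>space M. block k l \<omega> = w})" for k w
    by (subst emeasure_distr[OF measurable_block])
       (auto simp: emeasure_eq_measure intro!: arg_cong[where f=prob])
  have prob_distr_block: "prob {\<omega>\<in>space M. block k l \<omega> \<in> B}
      = measure (distr M (count_space UNIV) (block k l)) B" for k
    by (subst measure_distr[OF measurable_block]) (auto intro!: arg_cong[where f=prob])
  have "distr M (count_space UNIV) (block k l) = distr M (count_space UNIV) (block 0 l)"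
    by (rule measure_eqI_countable[where A=UNIV]) (simp_all add: emeasure_distr_block point)
  then show ?thesis by (simp add: prob_distr_block)
qed

lemma indep_var_blocks:
  "indep_var (count_space UNIV) (block 0 k) (count_space UNIV) (block k l)"
proof -
  define window where "window j m f = map (\<lambda>t. f (j + Suc t)) [0..<m]" for j m and f :: "nat \<Rightarrow> int"
  have block_restrict: "block j m = window j m \<circ> (\<lambda>\<omega>. restrict (\<lambda>i. X i \<omega>) {j+1..j+m})" for j m
    by (auto simp: block_def window_def fun_eq_iff)
  have measurable_window: "window j m \<in> measurable (PiM {j+1..j+m} (\<lambda>_. count_space UNIV)) (count_space UNIV)" for j m
    unfolding window_def by (intro measurable_map_list measurable_component_singleton) auto
  have "indep_var (PiM {0+1..0+k} (\<lambda>_. count_space UNIV)) (\<lambda>\<omega>. restrict (\<lambda>i. X i \<omega>) {0+1..0+k})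
      (PiM {k+1..k+l} (\<lambda>_. count_space UNIV)) (\<lambda>\<omega>. restrict (\<lambda>i. X i \<omega>) {k+1..k+l})"
    by (rule indep_var_restrict[OF indep]) auto
  from indep_var_compose[OF this measurable_window measurable_window]
  show ?thesis unfolding block_restrict .
qed

lemma partial_sum_0 [simp]: "partial_sum X 0 \<omega> = 0"
  by (simp add: partial_sum_def)

lemma measurable_partial_sum [measurable]: "partial_sum X n \<in> measurable M (count_space UNIV)"
proof -
  have "partial_sum X n = sum_list \<circ> block 0 n"
    using sum_list_block[of 0 n] by (simp add: fun_eq_iff)
  then show ?thesis by (simp add: measurable_comp[OF measurable_block measurable_count_space])
qed

lemma sum_list_take_block:
  "i \<le> l \<Longrightarrow> sum_list (take i (block k l \<omega>)) = partial_sum X (k + i) \<omega> - partial_sum X k \<omega>"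
  by (simp add: take_block sum_list_block)

definition zero_prob :: "nat \<Rightarrow> nat \<Rightarrow> real" where
  "zero_prob N k = prob {\<omega>\<in>space M. partial_sum X k \<omega> mod int N = 0}"

definition avoid_prob :: "nat \<Rightarrow> nat \<Rightarrow> real" where
  "avoid_prob N l = prob {\<omega>\<in>space M. \<forall>i\<in>{1..l}. partial_sum X i \<omega> mod int N \<noteq> 0}"

lemma block_avoiding_iff:
  "block k l \<omega> \<in> avoiding N l \<longleftrightarrow> (\<forall>j\<in>{k<..k+l}. (partial_sum X j \<omega> - partial_sum X k \<omega>) mod int N \<noteq> 0)"
proof -
  have shift: "{k<..k+l} = plus k ` {1..l}"
    by (simp only: image_add_atLeastAtMost) auto
  have "block k l \<omega> \<in> avoiding N l
      \<longleftrightarrow> (\<forall>i\<in>{1..l}. (partial_sum X (k + i) \<omega> - partial_sum X k \<omega>) mod int N \<noteq> 0)"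
    by (simp add: avoiding_def sum_list_take_block)
  also have "\<dots> \<longleftrightarrow> (\<forall>j\<in>plus k ` {1..l}. (partial_sum X j \<omega> - partial_sum X k \<omega>) mod int N \<noteq> 0)"
    by (simp only: Set.ball_simps(9))
  finally show ?thesis unfolding shift .
qed

lemma prob_block_avoiding: "prob {\<omega>\<in>space M. block k l \<omega> \<in> avoiding N l} = avoid_prob N l"
  using prob_block_shift[of k l "avoiding N l"]
  by (simp add: block_avoiding_iff avoid_prob_def atLeastSucAtMost_greaterThanAtMost[symmetric])

lemma prob_avoid_after:
  "prob {\<omega>\<in>space M. \<forall>j\<in>{k<..k+l}. (partial_sum X j \<omega> - partial_sum X k \<omega>) mod int N \<noteq> 0} = avoid_prob N l"
  using prob_block_avoiding[of k l N] by (simp add: block_avoiding_iff)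

lemma prob_last_zero:
  assumes "k \<le> m"
  shows "prob {\<omega>\<in>space M. partial_sum X k \<omega> mod int N = 0 \<and> (\<forall>j\<in>{k<..m}. partial_sum X j \<omega> mod int N \<noteq> 0)}
    = zero_prob N k * avoid_prob N (m - k)"
proof -
  let ?Z = "{w. sum_list w mod int N = 0}"
  have "prob {\<omega>\<in>space M. partial_sum X k \<omega> mod int N = 0 \<and> (\<forall>j\<in>{k<..m}. partial_sum X j \<omega> mod int N \<noteq> 0)}
      = prob {\<omega>\<in>space M. block 0 k \<omega> \<in> ?Z \<and> block k (m - k) \<omega> \<in> avoiding N (m - k)}"
    using assms by (intro arg_cong[where f=prob]) (auto simp: sum_list_block block_avoiding_iff dvd_diff_left_iff)
  also have "\<dots> = prob {\<omega>\<in>space M. block 0 k \<omega> \<in> ?Z} * prob {\<omega>\<in>space M. block k (m - k) \<omega> \<in> avoiding N (m - k)}"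
    by (rule prob_indep_random_variable[OF indep_var_blocks]) simp_all
  also have "\<dots> = zero_prob N k * avoid_prob N (m - k)"
    by (simp add: prob_block_avoiding sum_list_block zero_prob_def)
  finally show ?thesis .
qed

text \<open>Last-exit decomposition: split according to the last \<open>k \<le> m\<close> with \<open>S\<^sub>k \<equiv> 0\<close>.\<close>

lemma sum_zero_prob_avoid_prob: "(\<Sum>k\<le>m. zero_prob N k * avoid_prob N (m - k)) = 1"
proof -
  define E where "E k = {\<omega>\<in>space M. partial_sum X k \<omega> mod int N = 0 \<and> (\<forall>j\<in>{k<..m}. partial_sum X j \<omega> mod int N \<noteq> 0)}" for k
  have events: "E k \<in> events" for k
    unfolding E_def by measurable
  have before: "k \<le> k'" if "\<omega> \<in> E k" "\<omega> \<in> E k'" "k \<le> m" for k k' \<omega>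
  proof (rule ccontr)
    assume "\<not> k \<le> k'"
    with \<open>k \<le> m\<close> have "k \<in> {k'<..m}" by simp
    with that show False by (auto simp: E_def)
  qed
  have "disjoint_family_on E {..m}"
    unfolding disjoint_family_on_def by (auto dest: before intro: antisym)
  moreover have "(\<Union>k\<le>m. E k) = space M"
  proof (intro equalityI subsetI)
    fix \<omega> assume "\<omega> \<in> space M"
    moreover obtain k where "k \<le> m" "partial_sum X k \<omega> mod int N = 0"
      "\<forall>j\<in>{k<..m}. partial_sum X j \<omega> mod int N \<noteq> 0"
      using ex_last_index[of "\<lambda>k. partial_sum X k \<omega> mod int N = 0" m] by auto
    ultimately have "\<omega> \<in> E k" unfolding E_def by blast
    with \<open>k \<le> m\<close> show "\<omega> \<in> (\<Union>k\<le>m. E k)" by blast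
  qed (auto simp: E_def)
  ultimately have "1 = (\<Sum>k\<le>m. prob (E k))"
    using finite_measure_finite_Union[of "{..m}" E] events prob_space by (simp add: image_subset_iff)
  also have "\<dots> = (\<Sum>k\<le>m. zero_prob N k * avoid_prob N (m - k))"
    by (simp add: E_def prob_last_zero)
  finally show ?thesis ..
qed

lemma sum_prob_shift_hits_zero:
  assumes "N > 0"
  shows "(\<Sum>u\<in>{0..<N}. prob {\<omega>\<in>space M. \<exists>n\<in>{1..N}. (int u + partial_sum X n \<omega>) mod int N = 0})
    = (\<Sum>j<N. avoid_prob N j)"
proof -
  let ?B = "\<lambda>u. {\<omega>\<in>space M. \<exists>n\<in>{1..N}. (int u + partial_sum X n \<omega>) mod int N = 0}"
  let ?C = "\<lambda>n. {\<omega>\<in>space M. \<forall>j\<in>{n<..N}. (partial_sum X j \<omega> - partial_sum X n \<omega>) mod int N \<noteq> 0}"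
  have count: "card {u\<in>{0..<N}. \<omega> \<in> ?B u} = card {n\<in>{1..N}. \<omega> \<in> ?C n}" if "\<omega> \<in> space M" for \<omega>
  proof -
    have "card {u\<in>{0..<N}. \<omega> \<in> ?B u} = card {u\<in>{0..<N}. \<exists>n\<in>{1..N}. (int u + partial_sum X n \<omega>) mod int N = 0}"
      using that by simp
    also have "\<dots> = card ((\<lambda>n. partial_sum X n \<omega> mod int N) ` {1..N})"
      using assms by (rule card_shifts_hitting_zero)
    also have "\<dots> = card {n\<in>{1..N}. \<forall>j\<in>{1..N}. n < j \<longrightarrow> partial_sum X j \<omega> mod int N \<noteq> partial_sum X n \<omega> mod int N}"
      by (rule card_last_occurrences[symmetric]) simp
    also have "\<dots> = card {n\<in>{1..N}. \<omega> \<in> ?C n}"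
    proof -
      have "(a - b) mod int N \<noteq> 0 \<longleftrightarrow> a mod int N \<noteq> b mod int N" for a b
        by (simp add: mod_eq_dvd_iff mod_eq_0_iff_dvd)
      then show ?thesis using that by (intro arg_cong[where f=card]) auto
    qed
    finally show ?thesis .
  qed
  have "?B u \<in> events" for u
    by measurable
  moreover have "?C n \<in> events" for n
    by measurable
  ultimately have "(\<Sum>u\<in>{0..<N}. prob (?B u)) = (\<Sum>n\<in>{1..N}. prob (?C n))"
    using count by (intro sum_prob_eq_if_counts_eq) simp_all
  also have "\<dots> = (\<Sum>n\<in>{1..N}. avoid_prob N (N - n))"
  proof (rule sum.cong[OF refl])
    fix n assume "n \<in> {1..N}"
    then show "prob (?C n) = avoid_prob N (N - n)" using prob_avoid_after[of n "N - n" N] by simp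
  qed
  also have "\<dots> = (\<Sum>j<N. avoid_prob N j)"
    by (rule sum.reindex_bij_witness[where i="\<lambda>j. N - j" and j="\<lambda>n. N - n"]) auto
  finally show ?thesis .
qed

lemma prob_hit_uniform_start:
  assumes "N > 0"
  shows "measure (rw_mod_space N M) {p \<in> space (rw_mod_space N M). \<exists>n\<in>{1..N}. R_mod N X n p = 0}
    = (\<Sum>j<N. avoid_prob N j) / N"
proof -
  let ?A = "{p \<in> space (rw_mod_space N M). \<exists>n\<in>{1..N}. R_mod N X n p = 0}"
  have "?A \<in> sets (measure_pmf (pmf_of_set {0..<N}) \<Otimes>\<^sub>M M)"
    unfolding rw_mod_space_def R_mod_def by measurable
  moreover have "Pair u -` ?A = {\<omega>\<in>space M. \<exists>n\<in>{1..N}. (int u + partial_sum X n \<omega>) mod int N = 0}" for u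
    by (auto simp: rw_mod_space_def R_mod_def space_pair_measure)
  ultimately have "measure (rw_mod_space N M) ?A
      = (\<Sum>u\<in>{0..<N}. prob {\<omega>\<in>space M. \<exists>n\<in>{1..N}. (int u + partial_sum X n \<omega>) mod int N = 0}) / N"
    using assms by (simp add: rw_mod_space_def measure_uniform_pair)
  then show ?thesis
    using sum_prob_shift_hits_zero[OF assms] by simp
qed

end

theorem corollary2:
  fixes M :: "'a measure" and X :: "nat \<Rightarrow> 'a \<Rightarrow> int" and N :: nat
  assumes "prob_space M"
    and "prob_space.indep_vars M (\<lambda>_. count_space UNIV) X {1..}"
    and "\<And>i. i \<ge> 1 \<Longrightarrow> distr M (count_space UNIV) (X i) = distr M (count_space UNIV) (X 1)"
    and "N \<ge> 2"
  shows "1 / (1 + (\<Sum>i\<in>{1..N-1}. measure M {\<omega>\<in>space M. partial_sum X i \<omega> mod int N = 0}))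
           \<le> measure (rw_mod_space N M)
               {p \<in> space (rw_mod_space N M). \<exists>n\<in>{1..N}. R_mod N X n p = 0}
      \<and> measure (rw_mod_space N M)
               {p \<in> space (rw_mod_space N M). \<exists>n\<in>{1..N}. R_mod N X n p = 0}
           \<le> 2 / (1 + (\<Sum>i\<in>{1..N-1}. measure M {\<omega>\<in>space M. partial_sum X i \<omega> mod int N = 0}))"
proof -
  interpret iid_walk M X
    using assms(1-3) by (rule iid_walk.intro[OF _ iid_walk_axioms.intro])
  define P where "P = (\<Sum>i<N. zero_prob N i)"
  define Q where "Q = (\<Sum>j<N. avoid_prob N j)"
  have "{..<N} = insert 0 {1..N-1}"
    using assms(4) by auto
  then have P: "1 + (\<Sum>i\<in>{1..N-1}. measure M {\<omega>\<in>space M. partial_sum X i \<omega> mod int N = 0}) = P"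
    by (simp add: P_def zero_prob_def prob_space)
  have hit: "measure (rw_mod_space N M) {p \<in> space (rw_mod_space N M). \<exists>n\<in>{1..N}. R_mod N X n p = 0}
      = Q / N"
    unfolding Q_def using assms(4) by (intro prob_hit_uniform_start) simp
  have "real N \<le> P * Q" "P * Q \<le> 2 * real N"
    unfolding P_def Q_def using sum_zero_prob_avoid_prob
    by (intro sum_product_bounds_of_convolution; simp add: zero_prob_def avoid_prob_def)+
  moreover have "1 \<le> P"
    unfolding P[symmetric] by (simp add: sum_nonneg)
  moreover have "real N > 0"
    using assms(4) by simp
  ultimately have "1 / P \<le> Q / N" "Q / N \<le> 2 / P"
    by (simp_all add: field_simps)
  then show ?thesis unfolding P hit by simp
qed

end
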